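(* Assume the setting and hypotheses of Theorem 1 (regular pure-feedback subsystems, lower-triangular coupling $\Delta$). Let $\mathcal{X}$ be the open neighborhood of the operating point on which the joint system is flat with flat output $\mathbf{y}=(\mathbf{y}^1,\dots,\mathbf{y}^N)$, where $\mathbf{y}^i=\mathbf{x}^i_1$. Suppose that for each $i$ smooth maps $h^i_k$, $k=1,\dots,r$, are given such that for all $(\mathbf{x},\mathbf{u})\in\mathcal{X}$: $$h^i_k\big(\mathbf{x}^i_1,\dots,\mathbf{x}^i_k,\bar f^i_k(\mathbf{x}^i_1,\dots,\mathbf{x}^i_{k+1})\big)=\mathbf{x}^i_{k+1}\quad (k=1,\dots,r-1),$$ $$h^i_r\big(\mathbf{x}^i_1,\dots,\mathbf{x}^i_r,\bar f^i_r(\mathbf{x}^i_1,\dots,\mathbf{x}^i_r,\mathbf{u}^i)\big)=\mathbf{u}^i.$$ Define maps recursively for $i=1,\dots,N$ by $\Phi^i_1(\mathbf{y})=\mathbf{y}^i$. For $k=2,\dots,r+1$, set $$\Phi^i_k(\mathbf{y},\dots,\mathbf{y}^{(k-1)})=h^i_{k-1}\Big(\Phi^i_1,\dots,\Phi^i_{k-1},\; D\Phi^i_{k-1}\,[\dot{\mathbf{y}};\dots;\mathbf{y}^{(k-1)}]-\Delta^i_{k-1}\big(\Phi_1,\dots,\Phi_{k-1},\Phi^1_k,\dots,\Phi^{i-1}_k\big)\Big).$$ Here $\Phi_s=(\Phi^1_s,\dots,\Phi^N_s)$. The term $D\Phi^i_{k-1}[\dot{\mathbf{y}};\dots;\mathbf{y}^{(k-1)}]$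 is the full Jacobian of $\Phi^i_{k-1}$ with respect to its arguments $(\mathbf{y},\dots,\mathbf{y}^{(k-2)})$, applied to $(\dot{\mathbf{y}},\dots,\mathbf{y}^{(k-1)})$; that is, it is the total time derivative of $\Phi^i_{k-1}$. The recursion is well defined when carried out in increasing order of $(k-1)N+i$, and the second argument of $\Delta^i_{k-1}$ is the substitution $\mathbf{x}_{\le k-1}\mapsto(\Phi_1,\dots,\Phi_{k-1})$, $\mathbf{x}^{<i}_k\mapsto(\Phi^1_k,\dots,\Phi^{i-1}_k)$ in the lower-triangular form $\bar\Delta^i_{k-1}$. Then each $\Phi^i_k$ is smooth. Moreover, along any trajectory of the coupled joint dynamics $\dot{\mathbf{x}}=\bar f(\mathbf{x},\mathbf{u})+\Delta(\mathbf{x})$ that stays in $\mathcal{X}$, we have, for all $i=1,\dots,N$ and $k=1,\dots,r$, $$\mathbf{x}^i_k=\Phi^i_k(\mathbf{y},\dots,\mathbf{y}^{(k-1)}),\qquad \mathbf{u}^i=\Phi^i_{r+1}(\mathbf{y},\dots,\mathbf{y}^{(r)}).$$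
   Context: Setup. There are $N$ subsystems. Subsystem $i$ has input $\mathbf{u}^i\in\mathbb{R}^{m_i}$ and state $\mathbf{x}^i=(\mathbf{x}^i_1,\dots,\mathbf{x}^i_r)\in\mathbb{R}^{rm_i}$ with $\mathbf{x}^i_j\in\mathbb{R}^{m_i}$. The joint state is $\mathbf{x}=(\mathbf{x}^1,\dots,\mathbf{x}^N)$ and the joint input is $\mathbf{u}=(\mathbf{u}^1,\dots,\mathbf{u}^N)$. Write $\mathbf{x}_j=(\mathbf{x}^1_j,\dots,\mathbf{x}^N_j)$, $\mathbf{x}_{\le j}=(\mathbf{x}_1,\dots,\mathbf{x}_j)$, and $\mathbf{x}^{<i}_{j+1}=(\mathbf{x}^1_{j+1},\dots,\mathbf{x}^{i-1}_{j+1})$. Coupled dynamics: $\dot{\mathbf{x}}^i_j=\bar f^i_j(\mathbf{x}^i_1,\dots,\mathbf{x}^i_{j+1})+\Delta^i_j(\mathbf{x})$ for $j<r$, and $\dot{\mathbf{x}}^i_r=\bar f^i_r(\mathbf{x}^i_1,\dots,\mathbf{x}^i_r,\mathbf{u}^i)+\Delta^i_r(\mathbf{x})$. Regularity. Each $\bar f^i_j$ is smooth near the operating point $(\mathbf{x}^*,\mathbf{u}^* )$, and at that point $\det D_{\mathbf{x}^i_{j+1}}\bar f^i_j\ne0$ for $j<r$ and $\det D_{\mathbf{u}^i}\bar f^i_r\ne0$. Lower-triangular coupling on $\mathcal{X}$. Each $\Delta^i_j$ is smooth and $\Delta^i_j(\mathbf{x})=\bar\Delta^i_j(\mathbf{x}_{\le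 j},\mathbf{x}^{<i}_{j+1})$ on $\mathcal{X}$. *)

theory Defs
  imports "HOL-Analysis.Analysis"
begin

text \<open>One layer x_j = (x^1_j,...,x^N_j) of the joint state is a vector in real^'d,
  where the finite index type 'd enumerates the coordinates of all subsystems and
  sub d in {1..N} tells to which subsystem coordinate d belongs (so m_i = card {d. sub d = i}).
  The joint state x = (x_1,...,x_r) is a vector in real^'d^'l, where the finite type 'l
  enumerates the layers via a bijection lay onto {1..r}.  The output tower
  (y, y', ..., y^(r)) is a vector in real^'d^'t, with ord a bijection of 't onto {0..r}.
  A vector "in R^{m_i}" is represented as a vector of real^'d supported on block i.\<close>

fun Ck :: "nat \<Rightarrow> 'a::euclidean_space set \<Rightarrow> ('a \<Rightarrow> 'b::real_normed_vector) \<Rightarrow> bool" where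
  "Ck 0 S f = continuous_on S f"
| "Ck (Suc n) S f = ((\<forall>x\<in>S. f differentiable (at x)) \<and>
      (\<forall>v. Ck n S (\<lambda>x. frechet_derivative f (at x) v)))"

definition smooth_on :: "'a::euclidean_space set \<Rightarrow> ('a \<Rightarrow> 'b::real_normed_vector) \<Rightarrow> bool" where
  "smooth_on S f = (\<forall>n. Ck n S f)"

definition blk :: "('d::finite \<Rightarrow> nat) \<Rightarrow> nat \<Rightarrow> real^'d \<Rightarrow> real^'d" where
  "blk sub i v = (\<chi> d. if sub d = i then v $ d else 0)"

definition layer :: "('l::finite \<Rightarrow> nat) \<Rightarrow> nat \<Rightarrow> 'l" where
  "layer lay k = the_inv lay k"

text \<open>bmask i k x represents (x^i_1,...,x^i_k).\<close>
definition bmask :: "('d::finite \<Rightarrow> nat) \<Rightarrow> ('l::finite \<Rightarrow> nat) \<Rightarrow> nat \<Rightarrow> nat \<Rightarrow> real^'d^'l \<Rightarrow> real^'d^'l" where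
  "bmask sub lay i k x = (\<chi> l d. if sub d = i \<and> lay l \<le> k then x $ l $ d else 0)"

text \<open>lowtri i j x represents (x_{<=j}, x^{<i}_{j+1}).\<close>
definition lowtri :: "('d::finite \<Rightarrow> nat) \<Rightarrow> ('l::finite \<Rightarrow> nat) \<Rightarrow> nat \<Rightarrow> nat \<Rightarrow> real^'d^'l \<Rightarrow> real^'d^'l" where
  "lowtri sub lay i j x = (\<chi> l d. if lay l \<le> j \<or> (lay l = Suc j \<and> sub d < i) then x $ l $ d else 0)"

definition Fj :: "('d::finite \<Rightarrow> nat) \<Rightarrow> ('l::finite \<Rightarrow> nat) \<Rightarrow> nat
    \<Rightarrow> (nat \<Rightarrow> nat \<Rightarrow> real^'d^'l \<Rightarrow> real^'d) \<Rightarrow> (nat \<Rightarrow> (real^'d^'l) \<times> (real^'d) \<Rightarrow> real^'d)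
    \<Rightarrow> real^'d^'l \<Rightarrow> real^'d \<Rightarrow> real^'d^'l" where
  "Fj sub lay r fb fr x u = (\<chi> l d.
     (if lay l < r then fb (lay l) (sub d) (bmask sub lay (sub d) (Suc (lay l)) x)
      else fr (sub d) (bmask sub lay (sub d) r x, blk sub (sub d) u)) $ d)"

definition stackPhi :: "('d::finite \<Rightarrow> nat) \<Rightarrow> ('l::finite \<Rightarrow> nat) \<Rightarrow> (nat \<Rightarrow> nat \<Rightarrow> 'y \<Rightarrow> real^'d) \<Rightarrow> 'y \<Rightarrow> real^'d^'l" where
  "stackPhi sub lay Phi Y = (\<chi> l d. Phi (lay l) (sub d) Y $ d)"

text \<open>(y,...,y^(r)) |-> (y',...,y^(r),0): the direction of the total time derivative.\<close>
definition tshift :: "('t::finite \<Rightarrow> nat) \<Rightarrow> nat \<Rightarrow> real^'d^'t \<Rightarrow> real^'d^'t" where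
  "tshift ord r Y = (\<chi> s. if ord s < r then Y $ the_inv ord (Suc (ord s)) else 0)"

definition tower :: "('t::finite \<Rightarrow> nat) \<Rightarrow> (nat \<Rightarrow> real \<Rightarrow> real^'d) \<Rightarrow> real \<Rightarrow> real^'d^'t" where
  "tower ord Ys t = (\<chi> s. Ys (ord s) t)"

definition det_on :: "'d set \<Rightarrow> ('d \<Rightarrow> 'd \<Rightarrow> real) \<Rightarrow> real" where
  "det_on B J = (\<Sum>p | p permutes B. of_int (sign p) * (\<Prod>d\<in>B. J d (p d)))"

end

theory Submission
  imports Defs
begin

text \<open>
  By induction along the order of the recursion (lexicographic in (k, i)), each Phi^i_k is smooth on the
  open set of towers (y, ..., y^(r)) at which every argument passed so far to the smooth maps h and
  Deltabar lies in their domains, and on this set it depends only on y, ..., y^(k-1).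
  Along a trajectory the same induction gives Phi^i_k = x^i_k: the total derivative of Phi^i_(k-1) is the
  time derivative of x^i_(k-1), that is fbar + Delta; by the lower triangular structure the coupling term
  is evaluated at states recovered earlier, so subtracting it leaves fbar, which h inverts.
  The dependence on y, ..., y^(k-1) only is what makes the chain rule applicable although y^(r) is not
  assumed differentiable.
\<close>

section \<open>Smooth maps on open subsets of Euclidean spaces\<close>

lemma Ck_Suc_imp_Ck: "Ck (Suc n) S f \<Longrightarrow> Ck n S f"
proof (induction n arbitrary: f)
  case 0
  then show ?case
    by (auto intro!: continuous_at_imp_continuous_on differentiable_imp_continuous_within)
next
  case (Suc n)
  then show ?case by (metis Ck.simps(2))
qed

lemma Ck_subset: "Ck n S f \<Longrightarrow> T \<subseteq> S \<Longrightarrow> Ck n T f"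
  by (induction n arbitrary: f) (auto intro: continuous_on_subset)

lemma Ck_cong: "open S \<Longrightarrow> Ck n S f \<Longrightarrow> (\<And>x. x \<in> S \<Longrightarrow> f x = g x) \<Longrightarrow> Ck n S g"
proof (induction n arbitrary: f g)
  case 0
  then show ?case using continuous_on_cong by auto
next
  case (Suc n)
  have "(g has_derivative frechet_derivative f (at x)) (at x)" if "x \<in> S" for x
    using Suc.prems that
    by (intro has_derivative_transform_within_open[of f _ x UNIV S g])
       (auto simp: frechet_derivative_works[symmetric])
  then have dg: "g differentiable at x"
    and eq: "frechet_derivative f (at x) = frechet_derivative g (at x)" if "x \<in> S" for x
    using that by (auto simp: differentiable_def frechet_derivative_at)
  have "Ck n S (\<lambda>x. frechet_derivative g (at x) v)" for v
  proof (rule Suc.IH)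
    show "Ck n S (\<lambda>x. frechet_derivative f (at x) v)"
      using Suc.prems(2) by simp
  qed (use \<open>open S\<close> eq in auto)
  with dg show ?case by simp
qed

lemma Ck_SucI:
  assumes "open S" "\<And>x. x \<in> S \<Longrightarrow> (f has_derivative D x) (at x)" "\<And>v. Ck n S (\<lambda>x. D x v)"
  shows "Ck (Suc n) S f"
proof -
  have "D x = frechet_derivative f (at x)" if "x \<in> S" for x
    using assms(2)[OF that] by (rule frechet_derivative_at)
  then have "Ck n S (\<lambda>x. frechet_derivative f (at x) v)" for v
    by (intro Ck_cong[OF \<open>open S\<close> assms(3)]) simp
  moreover have "f differentiable at x" if "x \<in> S" for x
    using assms(2)[OF that] by (rule differentiableI)
  ultimately show ?thesis by simp
qed

lemma Ck_const: "Ck n S (\<lambda>x. c)"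
  by (induction n arbitrary: c) (simp_all add: frechet_derivative_const)

lemma Ck_add: "open S \<Longrightarrow> Ck n S f \<Longrightarrow> Ck n S g \<Longrightarrow> Ck n S (\<lambda>x. f x + g x)"
proof (induction n arbitrary: f g)
  case 0
  then show ?case by (auto intro: continuous_on_add)
next
  case (Suc n)
  show ?case
  proof (rule Ck_SucI[OF \<open>open S\<close>])
    show "((\<lambda>x. f x + g x) has_derivative
        (\<lambda>v. frechet_derivative f (at x) v + frechet_derivative g (at x) v)) (at x)" if "x \<in> S" for x
      using Suc.prems that by (intro has_derivative_add) (simp_all add: frechet_derivative_works[symmetric])
    show "Ck n S (\<lambda>x. frechet_derivative f (at x) v + frechet_derivative g (at x) v)" for v
      using Suc.prems Suc.IH[of "\<lambda>x. frechet_derivative f (at x) v" "\<lambda>x. frechet_derivative g (at x) v"]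
      by simp
  qed
qed

lemma Ck_bounded_linear_comp:
  "open S \<Longrightarrow> bounded_linear L \<Longrightarrow> Ck n S f \<Longrightarrow> Ck n S (\<lambda>x. L (f x))"
proof (induction n arbitrary: f)
  case 0
  then show ?case by (auto intro: continuous_on_compose2[OF linear_continuous_on])
next
  case (Suc n)
  show ?case
  proof (rule Ck_SucI[OF \<open>open S\<close>])
    show "((\<lambda>x. L (f x)) has_derivative (\<lambda>v. L (frechet_derivative f (at x) v))) (at x)" if "x \<in> S" for x
      using Suc.prems that
      by (intro bounded_linear.has_derivative[OF Suc.prems(2)]) (simp add: frechet_derivative_works[symmetric])
    show "Ck n S (\<lambda>x. L (frechet_derivative f (at x) v))" for v
      using Suc.prems Suc.IH[of "\<lambda>x. frechet_derivative f (at x) v"] by simp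
  qed
qed

lemma Ck_scaleR: "open S \<Longrightarrow> Ck n S a \<Longrightarrow> Ck n S w \<Longrightarrow> Ck n S (\<lambda>x. a x *\<^sub>R w x)"
proof (induction n arbitrary: a w)
  case 0
  then show ?case by (auto intro: continuous_on_scaleR)
next
  case (Suc n)
  show ?case
  proof (rule Ck_SucI[OF \<open>open S\<close>])
    show "((\<lambda>x. a x *\<^sub>R w x) has_derivative
        (\<lambda>v. a x *\<^sub>R frechet_derivative w (at x) v + frechet_derivative a (at x) v *\<^sub>R w x)) (at x)"
      if "x \<in> S" for x
      using Suc.prems that by (intro has_derivative_scaleR) (simp_all add: frechet_derivative_works[symmetric])
    show "Ck n S (\<lambda>x. a x *\<^sub>R frechet_derivative w (at x) v + frechet_derivative a (at x) v *\<^sub>R w x)" for v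
    proof (rule Ck_add[OF \<open>open S\<close>])
      show "Ck n S (\<lambda>x. a x *\<^sub>R frechet_derivative w (at x) v)"
        using Suc.IH[OF \<open>open S\<close> Ck_Suc_imp_Ck[OF Suc.prems(2)]] Suc.prems(3) by simp
      show "Ck n S (\<lambda>x. frechet_derivative a (at x) v *\<^sub>R w x)"
        using Suc.IH[OF \<open>open S\<close> _ Ck_Suc_imp_Ck[OF Suc.prems(3)]] Suc.prems(2) by simp
    qed
  qed
qed

lemma Ck_sum:
  assumes "open S" "finite I" "\<And>i. i \<in> I \<Longrightarrow> Ck n S (f i)"
  shows "Ck n S (\<lambda>x. \<Sum>i\<in>I. f i x)"
  using assms(2,3)
proof (induction I rule: finite_induct)
  case empty
  then show ?case by (simp add: Ck_const)
next
  case (insert i I)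
  then show ?case by (simp add: Ck_add[OF assms(1)])
qed

lemma linear_eq_sum_Basis: "linear L \<Longrightarrow> L u = (\<Sum>b\<in>Basis. (u \<bullet> b) *\<^sub>R L b)"
  by (subst euclidean_representation[symmetric, of u]) (simp only: linear_sum linear_scale)

lemma Ck_compose:
  "open S \<Longrightarrow> open T \<Longrightarrow> f ` S \<subseteq> T \<Longrightarrow> Ck n T g \<Longrightarrow> Ck n S f \<Longrightarrow> Ck n S (\<lambda>x. g (f x))"
proof (induction n arbitrary: f g)
  case 0
  then show ?case by (auto intro: continuous_on_compose2)
next
  case (Suc n)
  have df: "f differentiable at x" and dg: "g differentiable at (f x)" if "x \<in> S" for x
    using Suc.prems that by auto
  show ?case
  proof (rule Ck_SucI[OF \<open>open S\<close>])
    \<comment> \<open>expanding Dg in the standard basis builds the derivative from operations known to preserve C^k\<close>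
    show "((\<lambda>x. g (f x)) has_derivative (\<lambda>v. \<Sum>b\<in>Basis.
        (frechet_derivative f (at x) v \<bullet> b) *\<^sub>R frechet_derivative g (at (f x)) b)) (at x)"
      if "x \<in> S" for x
    proof (rule has_derivative_eq_rhs)
      show "((\<lambda>x. g (f x)) has_derivative
          (\<lambda>v. frechet_derivative g (at (f x)) (frechet_derivative f (at x) v))) (at x)"
        using has_derivative_compose[OF df[OF that, unfolded frechet_derivative_works]
            dg[OF that, unfolded frechet_derivative_works]] .
      show "(\<lambda>v. frechet_derivative g (at (f x)) (frechet_derivative f (at x) v)) = (\<lambda>v. \<Sum>b\<in>Basis.
          (frechet_derivative f (at x) v \<bullet> b) *\<^sub>R frechet_derivative g (at (f x)) b)"
        by (rule ext, rule linear_eq_sum_Basis[OF linear_frechet_derivative[OF dg[OF that]]])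
    qed
    show "Ck n S (\<lambda>x. \<Sum>b\<in>Basis. (frechet_derivative f (at x) v \<bullet> b) *\<^sub>R frechet_derivative g (at (f x)) b)" for v
    proof (intro Ck_sum[OF \<open>open S\<close> finite_Basis] Ck_scaleR[OF \<open>open S\<close>])
      show "Ck n S (\<lambda>x. frechet_derivative f (at x) v \<bullet> b)" for b
        using Suc.prems(5) by (auto intro: Ck_bounded_linear_comp[OF \<open>open S\<close> bounded_linear_inner_left])
      show "Ck n S (\<lambda>x. frechet_derivative g (at (f x)) b)" for b
        using Suc.prems(4) Suc.IH[OF \<open>open S\<close> \<open>open T\<close> \<open>f ` S \<subseteq> T\<close> _ Ck_Suc_imp_Ck[OF Suc.prems(5)],
            of "\<lambda>y. frechet_derivative g (at y) b"]
        by simp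
    qed
  qed
qed

lemma Ck_bounded_linear:
  assumes "bounded_linear L"
  shows "Ck n S L"
proof (cases n)
  case 0
  then show ?thesis
    using assms by (simp add: linear_continuous_on)
next
  case (Suc m)
  have "frechet_derivative L (at x) = L" for x
    by (rule frechet_derivative_at[OF bounded_linear_imp_has_derivative[OF assms], symmetric])
  with assms Suc show ?thesis
    by (simp add: Ck_const bounded_linear_imp_differentiable)
qed

lemma Ck_euclidean_components:
  assumes "open S" "\<And>b. b \<in> Basis \<Longrightarrow> Ck n S (\<lambda>x. f x \<bullet> b)"
  shows "Ck n S f"
proof -
  have "Ck n S (\<lambda>x. \<Sum>b\<in>Basis. (f x \<bullet> b) *\<^sub>R b)"
    using assms by (intro Ck_sum[OF \<open>open S\<close> finite_Basis] Ck_scaleR[OF \<open>open S\<close> _ Ck_const])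
  then show ?thesis by (simp only: euclidean_representation)
qed

lemma Ck_frechet_derivative_apply:
  assumes "open S" "Ck (Suc n) S f" "Ck n S w"
  shows "Ck n S (\<lambda>x. frechet_derivative f (at x) (w x))"
proof (rule Ck_cong[OF \<open>open S\<close>])
  show "Ck n S (\<lambda>x. \<Sum>b\<in>Basis. (w x \<bullet> b) *\<^sub>R frechet_derivative f (at x) b)"
    using assms by (intro Ck_sum[OF \<open>open S\<close> finite_Basis] Ck_scaleR[OF \<open>open S\<close>]
        Ck_bounded_linear_comp[OF \<open>open S\<close> bounded_linear_inner_left]) auto
  show "(\<Sum>b\<in>Basis. (w x \<bullet> b) *\<^sub>R frechet_derivative f (at x) b) = frechet_derivative f (at x) (w x)"
    if "x \<in> S" for x
    using assms(2) that by (auto intro: linear_eq_sum_Basis[OF linear_frechet_derivative, symmetric])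
qed

lemma smooth_on_subset: "smooth_on S f \<Longrightarrow> T \<subseteq> S \<Longrightarrow> smooth_on T f"
  unfolding smooth_on_def using Ck_subset by blast

lemma smooth_on_const: "smooth_on S (\<lambda>x. c)"
  unfolding smooth_on_def using Ck_const by blast

lemma smooth_on_add: "open S \<Longrightarrow> smooth_on S f \<Longrightarrow> smooth_on S g \<Longrightarrow> smooth_on S (\<lambda>x. f x + g x)"
  unfolding smooth_on_def using Ck_add by blast

lemma smooth_on_bounded_linear_comp:
  "open S \<Longrightarrow> bounded_linear L \<Longrightarrow> smooth_on S f \<Longrightarrow> smooth_on S (\<lambda>x. L (f x))"
  unfolding smooth_on_def using Ck_bounded_linear_comp by blast

lemma smooth_on_compose:
  "open S \<Longrightarrow> open T \<Longrightarrow> f ` S \<subseteq> T \<Longrightarrow> smooth_on T g \<Longrightarrow> smooth_on S f \<Longrightarrow> smooth_on S (\<lambda>x. g (f x))"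
  unfolding smooth_on_def using Ck_compose by blast

lemma smooth_on_bounded_linear: "bounded_linear L \<Longrightarrow> smooth_on S L"
  unfolding smooth_on_def using Ck_bounded_linear by blast

lemma smooth_on_frechet_derivative_apply:
  "open S \<Longrightarrow> smooth_on S f \<Longrightarrow> smooth_on S w \<Longrightarrow> smooth_on S (\<lambda>x. frechet_derivative f (at x) (w x))"
  unfolding smooth_on_def using Ck_frechet_derivative_apply by blast

lemma smooth_on_diff: "open S \<Longrightarrow> smooth_on S f \<Longrightarrow> smooth_on S g \<Longrightarrow> smooth_on S (\<lambda>x. f x - g x)"
  using smooth_on_add[of S f "\<lambda>x. - g x"]
    smooth_on_bounded_linear_comp[OF _ bounded_linear_minus[OF bounded_linear_ident], of S g]
  by simp

lemma smooth_on_Pair: "open S \<Longrightarrow> smooth_on S f \<Longrightarrow> smooth_on S g \<Longrightarrow> smooth_on S (\<lambda>x. (f x, g x))"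
  using smooth_on_add[of S "\<lambda>x. (f x, 0)" "\<lambda>x. (0, g x)"]
    smooth_on_bounded_linear_comp[OF _ bounded_linear_Pair[OF bounded_linear_ident bounded_linear_zero], of S f]
    smooth_on_bounded_linear_comp[OF _ bounded_linear_Pair[OF bounded_linear_zero bounded_linear_ident], of S g]
  by simp

lemma smooth_on_vec:
  fixes F :: "'a::euclidean_space \<Rightarrow> 'b::euclidean_space ^ 'n"
  assumes "open S" "\<And>l. smooth_on S (\<lambda>x. F x $ l)"
  shows "smooth_on S F"
proof -
  have "smooth_on S (\<lambda>x. F x \<bullet> axis l u)" for l u
    using smooth_on_bounded_linear_comp[OF \<open>open S\<close> bounded_linear_inner_left assms(2)]
    by (simp add: inner_axis)
  then have "Ck n S (\<lambda>x. F x \<bullet> b)" if "b \<in> Basis" for n b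
    using that unfolding Basis_vec_def smooth_on_def by auto
  then show ?thesis
    unfolding smooth_on_def using Ck_euclidean_components[OF \<open>open S\<close>] by blast
qed

lemma smooth_on_imp_differentiable: "smooth_on S f \<Longrightarrow> x \<in> S \<Longrightarrow> f differentiable at x"
  unfolding smooth_on_def by (metis Ck.simps(2))

lemma smooth_on_imp_continuous_on: "smooth_on S f \<Longrightarrow> continuous_on S f"
  unfolding smooth_on_def by (metis Ck.simps(1))

section \<open>Maps depending on only some components of a vector\<close>

lemma bounded_linear_axis: "bounded_linear (axis s :: 'a::euclidean_space \<Rightarrow> 'a^'n)"
proof -
  have "linear (axis s :: 'a \<Rightarrow> 'a^'n)"
    by (rule linearI) (simp_all add: vec_eq_iff axis_def)
  then show ?thesis by (simp add: linear_conv_bounded_linear)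
qed

lemma has_vector_derivative_vec:
  fixes c :: "real \<Rightarrow> 'a::euclidean_space^'n"
  assumes "\<And>s. ((\<lambda>t. c t $ s) has_vector_derivative v $ s) (at t)"
  shows "(c has_vector_derivative v) (at t)"
proof -
  have sum_axis: "x = (\<Sum>s\<in>UNIV. axis s (x $ s))" for x :: "'a^'n"
    by (simp add: vec_eq_iff sum_component axis_def)
  have "((\<lambda>t. \<Sum>s\<in>UNIV. axis s (c t $ s)) has_vector_derivative (\<Sum>s\<in>UNIV. axis s (v $ s))) (at t)"
    by (intro has_vector_derivative_sum bounded_linear.has_vector_derivative[OF bounded_linear_axis] assms)
  then show ?thesis
    by (subst (asm) (1 2) sum_axis[symmetric])
qed

definition cylinder :: "'n set \<Rightarrow> ('a^'n) set \<Rightarrow> bool" where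
  "cylinder I U \<longleftrightarrow> (\<forall>Y\<in>U. \<forall>Y'. (\<forall>s\<in>I. Y' $ s = Y $ s) \<longrightarrow> Y' \<in> U)"

definition depends_only_on :: "'n set \<Rightarrow> ('a^'n) set \<Rightarrow> ('a^'n \<Rightarrow> 'b) \<Rightarrow> bool" where
  "depends_only_on I U f \<longleftrightarrow> (\<forall>Y\<in>U. \<forall>Y'. (\<forall>s\<in>I. Y' $ s = Y $ s) \<longrightarrow> f Y' = f Y)"

lemma cylinderD: "cylinder I U \<Longrightarrow> Y \<in> U \<Longrightarrow> \<forall>s\<in>I. Y' $ s = Y $ s \<Longrightarrow> Y' \<in> U"
  unfolding cylinder_def by blast

lemma depends_only_onD:
  "depends_only_on I U f \<Longrightarrow> Y \<in> U \<Longrightarrow> \<forall>s\<in>I. Y' $ s = Y $ s \<Longrightarrow> f Y' = f Y"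
  unfolding depends_only_on_def by blast

lemma cylinder_mono: "cylinder I U \<Longrightarrow> I \<subseteq> J \<Longrightarrow> cylinder J U"
  unfolding cylinder_def by blast

lemma depends_only_on_mono: "depends_only_on I U f \<Longrightarrow> I \<subseteq> J \<Longrightarrow> depends_only_on J U f"
  unfolding depends_only_on_def by blast

lemma depends_only_on_subset: "depends_only_on I U f \<Longrightarrow> V \<subseteq> U \<Longrightarrow> depends_only_on I V f"
  unfolding depends_only_on_def by blast

lemma depends_only_on_comp: "depends_only_on I U f \<Longrightarrow> depends_only_on I U (\<lambda>Y. g (f Y))"
  unfolding depends_only_on_def by metis

lemma cylinder_INT:
  "(\<And>a. a \<in> A \<Longrightarrow> cylinder I (U a)) \<Longrightarrow> cylinder I (\<Inter>a\<in>A. U a)"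
  unfolding cylinder_def by blast

lemma depends_only_on_masked_matrix:
  fixes F :: "'l::finite \<Rightarrow> 'd::finite \<Rightarrow> 'a^'n \<Rightarrow> real"
  assumes "\<And>l d. P l d \<Longrightarrow> depends_only_on I U (F l d)"
  shows "depends_only_on I U (\<lambda>Y. \<chi> l d. if P l d then F l d Y else 0 :: real^'d^'l)"
  unfolding depends_only_on_def
proof (intro ballI allI impI)
  fix Y Y' assume "Y \<in> U" "\<forall>s\<in>I. Y' $ s = Y $ s"
  then have "F l d Y' = F l d Y" if "P l d" for l d
    using depends_only_onD[OF assms[OF that]] by blast
  then show "(\<chi> l d. if P l d then F l d Y' else 0 :: real^'d^'l) = (\<chi> l d. if P l d then F l d Y else 0)"
    by (simp add: vec_eq_iff)
qed

lemma smooth_on_vec_nth: "open S \<Longrightarrow> smooth_on S f \<Longrightarrow> smooth_on S (\<lambda>x. f x $ d)"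
  by (rule smooth_on_bounded_linear_comp[OF _ bounded_linear_vec_nth])

lemma smooth_on_masked_matrix:
  fixes F :: "'l::finite \<Rightarrow> 'd::finite \<Rightarrow> 'a::euclidean_space \<Rightarrow> real"
  assumes "open U" "\<And>l d. P l d \<Longrightarrow> smooth_on U (F l d)"
  shows "smooth_on U (\<lambda>Y. \<chi> l d. if P l d then F l d Y else 0 :: real^'d^'l)"
proof (intro smooth_on_vec[OF \<open>open U\<close>])
  show "smooth_on U (\<lambda>Y. (\<chi> l d. if P l d then F l d Y else 0 :: real^'d^'l) $ l $ d)" for l d
    using assms(2)[of l d] by (cases "P l d") (simp_all add: smooth_on_const)
qed

text \<open>Translating by a vector that vanishes on I leaves f unchanged near Y, hence also its derivative.\<close>
lemma frechet_derivative_depends_only_on: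
  fixes f :: "'a::real_normed_vector^'n \<Rightarrow> 'b::real_normed_vector"
  assumes "open U" "cylinder I U" "depends_only_on I U f" "\<And>Z. Z \<in> U \<Longrightarrow> f differentiable at Z"
    and "Y \<in> U" "\<forall>s\<in>I. Y' $ s = Y $ s"
  shows "frechet_derivative f (at Y') = frechet_derivative f (at Y)"
proof -
  define c where "c = Y' - Y"
  define D where "D = frechet_derivative f (at Y')"
  have "Y' \<in> U" using cylinderD[OF assms(2,5,6)] .
  then have "(f has_derivative D) (at (Y + c))"
    using assms(4) by (simp add: c_def D_def frechet_derivative_works)
  moreover have "((\<lambda>Z. Z + c) has_derivative (\<lambda>h. h)) (at Y)"
    by (auto intro!: derivative_eq_intros)
  ultimately have shifted: "((\<lambda>Z. f (Z + c)) has_derivative D) (at Y)"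
    using has_derivative_compose[of "\<lambda>Z. Z + c" "\<lambda>h. h" Y UNIV f D] by simp
  have invariant: "f (Z + c) = f Z" if "Z \<in> U" for Z
    using assms(6) by (intro depends_only_onD[OF assms(3) that]) (simp add: c_def)
  have "(f has_derivative D) (at Y)"
    by (rule has_derivative_transform_within_open[OF shifted \<open>open U\<close> \<open>Y \<in> U\<close> invariant])
  then show ?thesis
    unfolding D_def by (rule frechet_derivative_at)
qed

lemma frechet_derivative_apply_depends_only_on:
  fixes f :: "'a::real_normed_vector^'n \<Rightarrow> 'b::real_normed_vector"
  assumes "f differentiable at Y" "\<And>Z. \<forall>s\<in>I. Z $ s = Y $ s \<Longrightarrow> f Z = f Y"
    and "\<forall>s\<in>I. v' $ s = v $ s"
  shows "frechet_derivative f (at Y) v' = frechet_derivative f (at Y) v"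
proof -
  let ?D = "frechet_derivative f (at Y)"
  have "((\<lambda>t::real. Y + t *\<^sub>R (v' - v)) has_derivative (\<lambda>t. t *\<^sub>R (v' - v))) (at 0)"
    by (auto intro!: derivative_eq_intros)
  moreover have "(f has_derivative ?D) (at (Y + 0 *\<^sub>R (v' - v)))"
    using assms(1) by (simp add: frechet_derivative_works)
  ultimately have "((\<lambda>t::real. f (Y + t *\<^sub>R (v' - v))) has_derivative (\<lambda>t. ?D (t *\<^sub>R (v' - v)))) (at 0)"
    by (rule has_derivative_compose)
  moreover have "f (Y + t *\<^sub>R (v' - v)) = f Y" for t
    by (rule assms(2)) (use assms(3) in simp)
  then have "((\<lambda>t::real. f (Y + t *\<^sub>R (v' - v))) has_derivative (\<lambda>t. 0)) (at 0)"
    by simp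
  ultimately have "(\<lambda>t. ?D (t *\<^sub>R (v' - v))) = (\<lambda>t. 0)"
    by (rule has_derivative_unique)
  then have "?D (v' - v) = 0"
    by (metis scaleR_one)
  then show ?thesis
    using linear_frechet_derivative[OF assms(1)] by (simp add: linear_diff)
qed

text \<open>The components outside I are frozen at time t, so only those in I need to be differentiable.\<close>
lemma frechet_derivative_along_curve:
  fixes g :: "'a::euclidean_space^'n \<Rightarrow> 'b::real_normed_vector" and c :: "real \<Rightarrow> 'a^'n"
  assumes "open T" "t \<in> T" "g differentiable at (c t)"
    and "\<And>t' Z. t' \<in> T \<Longrightarrow> \<forall>s\<in>I. Z $ s = c t' $ s \<Longrightarrow> g Z = q t'"
    and "\<And>s. s \<in> I \<Longrightarrow> ((\<lambda>t. c t $ s) has_vector_derivative v $ s) (at t)"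
    and "\<And>s. s \<notin> I \<Longrightarrow> v $ s = 0"
    and "(q has_vector_derivative q') (at t)"
  shows "frechet_derivative g (at (c t)) v = q'"
proof -
  define D where "D = frechet_derivative g (at (c t))"
  define m where "m t' = (\<chi> s. if s \<in> I then c t' $ s else c t $ s)" for t'
  have "(m has_vector_derivative v) (at t)"
  proof (rule has_vector_derivative_vec)
    show "((\<lambda>t'. m t' $ s) has_vector_derivative v $ s) (at t)" for s
      using assms(5,6) by (cases "s \<in> I") (simp_all add: m_def)
  qed
  moreover have "(g has_derivative D) (at (m t))"
    using assms(3) by (simp add: m_def D_def frechet_derivative_works vec_lambda_eta)
  ultimately have "((\<lambda>t'. g (m t')) has_derivative (\<lambda>h. D (h *\<^sub>R v))) (at t)"
    unfolding has_vector_derivative_def by (rule has_derivative_compose)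
  moreover have "(\<lambda>h. D (h *\<^sub>R v)) = (\<lambda>h. h *\<^sub>R D v)"
    using linear_frechet_derivative[OF assms(3)] by (simp add: D_def linear_scale)
  ultimately have "((\<lambda>t'. g (m t')) has_vector_derivative D v) (at t)"
    by (simp add: has_vector_derivative_def)
  moreover have "g (m t') = q t'" if "t' \<in> T" for t'
    by (rule assms(4)[OF that]) (simp add: m_def)
  ultimately have "(q has_vector_derivative D v) (at t)"
    by (rule has_vector_derivative_transform_within_open[OF _ assms(1,2)])
  then show ?thesis
    unfolding D_def by (rule vector_derivative_unique_at[OF _ assms(7)])
qed

section \<open>Blocks, layers and the time shift\<close>

lemma blk_nth: "blk sub i v $ d = (if sub d = i then v $ d else 0)"
  by (simp add: blk_def)

lemma blk_diff: "blk sub i (a - b) = blk sub i a - blk sub i b"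
  by (simp add: vec_eq_iff blk_nth)

lemma blk_add: "blk sub i (a + b) = blk sub i a + blk sub i b"
  by (simp add: vec_eq_iff blk_nth)

lemma blk_blk: "blk sub i (blk sub i a) = blk sub i a"
  by (simp add: vec_eq_iff blk_nth)

lemma bounded_linear_blk: "bounded_linear (blk sub i)"
proof -
  have "linear (blk sub i)"
    by (rule linearI) (simp_all add: vec_eq_iff blk_nth)
  then show ?thesis by (simp add: linear_conv_bounded_linear)
qed

lemma bounded_linear_tshift: "bounded_linear (tshift ord r :: real^'d^'t \<Rightarrow> real^'d^'t)"
proof -
  have "linear (tshift ord r :: real^'d^'t \<Rightarrow> real^'d^'t)"
    by (rule linearI) (simp_all add: vec_eq_iff tshift_def)
  then show ?thesis by (simp add: linear_conv_bounded_linear)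
qed

lemma the_inv_into_range:
  "bij_betw f UNIV A \<Longrightarrow> j \<in> A \<Longrightarrow> f (the_inv f j) = j"
  by (rule f_the_inv_into_f_bij_betw) auto

lemma layer_lay: "bij_betw lay UNIV {1..r} \<Longrightarrow> layer lay (lay l) = l"
  unfolding layer_def by (rule the_inv_f_f) (simp add: bij_betw_def)

lemma lay_layer: "bij_betw lay UNIV {1..r} \<Longrightarrow> k \<in> {1..r} \<Longrightarrow> lay (layer lay k) = k"
  unfolding layer_def by (rule the_inv_into_range)

lemma tshift_agree_below:
  assumes "bij_betw ord UNIV {0..r}" "\<forall>s. ord s < k \<longrightarrow> Y' $ s = Y $ s"
  shows "\<forall>s. ord s < k - 1 \<longrightarrow> tshift ord r Y' $ s = tshift ord r Y $ s"
proof (intro allI impI)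
  fix s assume "ord s < k - 1"
  then show "tshift ord r Y' $ s = tshift ord r Y $ s"
    using assms(2) the_inv_into_range[OF assms(1), of "Suc (ord s)"] by (simp add: tshift_def)
qed

lemma tshift_tower:
  "bij_betw ord UNIV {0..r} \<Longrightarrow> tshift ord r (tower ord Ys t) $ s = (if ord s < r then Ys (Suc (ord s)) t else 0)"
  using the_inv_into_range[of ord "{0..r}" "Suc (ord s)"] by (simp add: tshift_def tower_def)

section \<open>Smoothness of the recursively defined maps\<close>

abbreviation precedes :: "nat \<Rightarrow> nat \<Rightarrow> nat \<Rightarrow> nat \<Rightarrow> bool" where
  "precedes k' i' k i \<equiv> k' < k \<or> k' = k \<and> i' < i"

lemma precedes_induct:
  assumes "\<And>k i. (\<And>k' i'. precedes k' i' k i \<Longrightarrow> P k' i') \<Longrightarrow> P k i"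
  shows "P k i"
proof -
  have "P (fst p) (snd p)" for p
  proof (induction p rule: wf_induct_rule[OF wf_lex_prod[OF wf_less_than wf_less_than]])
    case (1 p)
    show ?case
    proof (rule assms)
      fix k' i' assume "precedes k' i' (fst p) (snd p)"
      then show "P k' i'"
        using "1"[of "(k', i')"] by (cases p) auto
    qed
  qed
  from this[of "(k, i)"] show ?thesis by simp
qed

locale flat_recursion =
  fixes N r :: nat
    and sub :: "'d::finite \<Rightarrow> nat" and lay :: "'l::finite \<Rightarrow> nat" and ord :: "'t::finite \<Rightarrow> nat"
    and Db :: "nat \<Rightarrow> nat \<Rightarrow> real^'d^'l \<Rightarrow> real^'d"
    and h :: "nat \<Rightarrow> nat \<Rightarrow> (real^'d^'l) \<times> (real^'d) \<Rightarrow> real^'d"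
    and \<Phi> :: "nat \<Rightarrow> nat \<Rightarrow> real^'d^'t \<Rightarrow> real^'d"
    and DS :: "nat \<Rightarrow> nat \<Rightarrow> (real^'d^'l) set"
    and HS :: "nat \<Rightarrow> nat \<Rightarrow> ((real^'d^'l) \<times> (real^'d)) set"
  assumes sub: "\<And>d. sub d \<in> {1..N}"
    and lay: "bij_betw lay UNIV {1..r}"
    and ord: "bij_betw ord UNIV {0..r}"
    and Db_smooth: "\<And>j i. j \<in> {1..r} \<Longrightarrow> i \<in> {1..N} \<Longrightarrow> open (DS j i) \<and> smooth_on (DS j i) (Db j i)"
    and h_smooth: "\<And>k i. k \<in> {1..r} \<Longrightarrow> i \<in> {1..N} \<Longrightarrow> open (HS k i) \<and> smooth_on (HS k i) (h k i)"
    and Phi_1: "\<And>i Y. i \<in> {1..N} \<Longrightarrow> \<Phi> 1 i Y = blk sub i (Y $ the_inv ord 0)"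
    and Phi_rec: "\<And>k i Y. k \<in> {2..Suc r} \<Longrightarrow> i \<in> {1..N} \<Longrightarrow>
          \<Phi> k i Y = blk sub i (h (k - 1) i
             (bmask sub lay i (k - 1) (stackPhi sub lay \<Phi> Y),
              blk sub i (frechet_derivative (\<Phi> (k - 1) i) (at Y) (tshift ord r Y)
                         - Db (k - 1) i (lowtri sub lay i (k - 1) (stackPhi sub lay \<Phi> Y)))))"
begin

abbreviation is_index :: "nat \<Rightarrow> nat \<Rightarrow> bool" where
  "is_index k i \<equiv> k \<in> {1..Suc r} \<and> i \<in> {1..N}"

lemma lay_range: "lay l \<in> {1..r}"
  using bij_betwE[OF lay] by blast

lemma is_index_lay_sub: "is_index (lay l) (sub d)"
  using sub lay_range by fastforce

definition state_args :: "nat \<Rightarrow> nat \<Rightarrow> real^'d^'t \<Rightarrow> real^'d^'l" where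
  "state_args k i Y = bmask sub lay i (k - 1) (stackPhi sub lay \<Phi> Y)"

definition coupling_args :: "nat \<Rightarrow> nat \<Rightarrow> real^'d^'t \<Rightarrow> real^'d^'l" where
  "coupling_args k i Y = lowtri sub lay i (k - 1) (stackPhi sub lay \<Phi> Y)"

definition total_derivative :: "nat \<Rightarrow> nat \<Rightarrow> real^'d^'t \<Rightarrow> real^'d" where
  "total_derivative k i Y = frechet_derivative (\<Phi> (k - 1) i) (at Y) (tshift ord r Y)"

definition velocity_arg :: "nat \<Rightarrow> nat \<Rightarrow> real^'d^'t \<Rightarrow> real^'d" where
  "velocity_arg k i Y = blk sub i (total_derivative k i Y - Db (k - 1) i (coupling_args k i Y))"

definition h_args :: "nat \<Rightarrow> nat \<Rightarrow> real^'d^'t \<Rightarrow> (real^'d^'l) \<times> (real^'d)" where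
  "h_args k i Y = (state_args k i Y, velocity_arg k i Y)"

lemma Phi_step: "k \<in> {2..Suc r} \<Longrightarrow> i \<in> {1..N} \<Longrightarrow> \<Phi> k i Y = blk sub i (h (k - 1) i (h_args k i Y))"
  unfolding h_args_def state_args_def velocity_arg_def total_derivative_def coupling_args_def
  by (rule Phi_rec)

lemma state_args_eq:
  "state_args k i Y = (\<chi> l d. if sub d = i \<and> lay l \<le> k - 1 then \<Phi> (lay l) (sub d) Y $ d else 0)"
  by (simp add: state_args_def bmask_def stackPhi_def vec_eq_iff)

lemma coupling_args_eq:
  "1 \<le> k \<Longrightarrow> coupling_args k i Y
    = (\<chi> l d. if lay l \<le> k - 1 \<or> lay l = k \<and> sub d < i then \<Phi> (lay l) (sub d) Y $ d else 0)"
  by (simp add: coupling_args_def lowtri_def stackPhi_def vec_eq_iff)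

definition args_in_domain :: "nat \<Rightarrow> nat \<Rightarrow> real^'d^'t \<Rightarrow> bool" where
  "args_in_domain k i Y \<longleftrightarrow> (2 \<le> k \<longrightarrow>
     coupling_args k i Y \<in> DS (k - 1) i \<and> h_args k i Y \<in> HS (k - 1) i)"

definition admissible_before :: "nat \<Rightarrow> nat \<Rightarrow> (real^'d^'t) set" where
  "admissible_before k i = {Y. \<forall>k' i'. precedes k' i' k i \<longrightarrow> is_index k' i' \<longrightarrow> args_in_domain k' i' Y}"

text \<open>The open set \<Omega> of the theorem is admissible (Suc r) N.\<close>
definition admissible :: "nat \<Rightarrow> nat \<Rightarrow> (real^'d^'t) set" where
  "admissible k i = admissible_before k i \<inter> {Y. args_in_domain k i Y}"

definition regular :: "nat \<Rightarrow> nat \<Rightarrow> bool" where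
  "regular k i \<longleftrightarrow> open (admissible k i) \<and> cylinder {s. ord s < k} (admissible k i)
     \<and> smooth_on (admissible k i) (\<Phi> k i) \<and> depends_only_on {s. ord s < k} (admissible k i) (\<Phi> k i)"

lemma admissible_before_subset:
  "precedes k' i' k i \<Longrightarrow> is_index k' i' \<Longrightarrow> admissible_before k i \<subseteq> admissible k' i'"
  unfolding admissible_def admissible_before_def by auto

lemma admissible_before_eq_INT:
  "admissible_before k i = (\<Inter>(k', i') \<in> {(k', i'). precedes k' i' k i \<and> is_index k' i'}. admissible k' i')"
proof
  show "admissible_before k i \<subseteq> (\<Inter>(k', i') \<in> {(k', i'). precedes k' i' k i \<and> is_index k' i'}. admissible k' i')"
    using admissible_before_subset by blast
  show "(\<Inter>(k', i') \<in> {(k', i'). precedes k' i' k i \<and> is_index k' i'}. admissible k' i') \<subseteq> admissible_before k i"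
    unfolding admissible_before_def admissible_def by blast
qed

context
  fixes k i
  assumes earlier_regular: "\<And>k' i'. precedes k' i' k i \<Longrightarrow> is_index k' i' \<Longrightarrow> regular k' i'"
begin

lemma open_admissible_before: "open (admissible_before k i)"
  unfolding admissible_before_eq_INT
proof (rule open_INT)
  show "finite {(k', i'). precedes k' i' k i \<and> is_index k' i'}"
    by (rule finite_subset[of _ "{1..Suc r} \<times> {1..N}"]) auto
qed (use earlier_regular in \<open>auto simp: regular_def\<close>)

lemma cylinder_admissible_before: "cylinder {s. ord s < k} (admissible_before k i)"
  unfolding admissible_before_eq_INT
proof (rule cylinder_INT)
  fix p assume "p \<in> {(k', i'). precedes k' i' k i \<and> is_index k' i'}"
  then obtain k' i' where p: "p = (k', i')" "precedes k' i' k i" "is_index k' i'"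
    by blast
  with earlier_regular have "cylinder {s. ord s < k'} (admissible k' i')"
    by (simp add: regular_def)
  then show "cylinder {s. ord s < k} (case p of (k', i') \<Rightarrow> admissible k' i')"
    unfolding p(1) prod.case by (rule cylinder_mono) (use p(2) in auto)
qed

lemma regular_on_admissible_before:
  assumes "precedes k' i' k i" "is_index k' i'"
  shows "smooth_on (admissible_before k i) (\<Phi> k' i')"
    and "depends_only_on {s. ord s < k} (admissible_before k i) (\<Phi> k' i')"
proof -
  have "regular k' i'" and sub: "admissible_before k i \<subseteq> admissible k' i'"
    using assms earlier_regular admissible_before_subset by auto
  then show "smooth_on (admissible_before k i) (\<Phi> k' i')"
    unfolding regular_def using smooth_on_subset by blast
  have "{s. ord s < k'} \<subseteq> {s. ord s < k}"
    using assms(1) by auto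
  with \<open>regular k' i'\<close> sub show "depends_only_on {s. ord s < k} (admissible_before k i) (\<Phi> k' i')"
    unfolding regular_def by (blast intro: depends_only_on_subset depends_only_on_mono)
qed

lemma stacked_Phi_regular:
  assumes "\<And>l d. P l d \<Longrightarrow> precedes (lay l) (sub d) k i"
  defines "S \<equiv> \<lambda>Y. \<chi> l d. if P l d then \<Phi> (lay l) (sub d) Y $ d else 0"
  shows "smooth_on (admissible_before k i) S"
    and "depends_only_on {s. ord s < k} (admissible_before k i) S"
proof -
  note U_open = open_admissible_before
  note entry = regular_on_admissible_before[OF assms(1) is_index_lay_sub]
  show "smooth_on (admissible_before k i) S"
    unfolding S_def
  proof (rule smooth_on_masked_matrix[OF U_open])
    show "smooth_on (admissible_before k i) (\<lambda>Y. \<Phi> (lay l) (sub d) Y $ d)" if "P l d" for l d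
      by (rule smooth_on_vec_nth[OF U_open entry(1)[OF that]])
  qed
  show "depends_only_on {s. ord s < k} (admissible_before k i) S"
    unfolding S_def
  proof (rule depends_only_on_masked_matrix)
    show "depends_only_on {s. ord s < k} (admissible_before k i) (\<lambda>Y. \<Phi> (lay l) (sub d) Y $ d)"
      if "P l d" for l d
      by (rule depends_only_on_comp[OF entry(2)[OF that]])
  qed
qed

lemma state_args_regular:
  "smooth_on (admissible_before k i) (state_args k i)"
  "depends_only_on {s. ord s < k} (admissible_before k i) (state_args k i)"
proof -
  have "precedes (lay l) (sub d) k i" if "sub d = i \<and> lay l \<le> k - 1" for l d
    using that is_index_lay_sub[of l d] by auto
  from stacked_Phi_regular[where P="\<lambda>l d. sub d = i \<and> lay l \<le> k - 1", OF this]
  show "smooth_on (admissible_before k i) (state_args k i)"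
    "depends_only_on {s. ord s < k} (admissible_before k i) (state_args k i)"
    unfolding state_args_eq by simp_all
qed

lemma coupling_args_regular:
  assumes "1 \<le> k"
  shows "smooth_on (admissible_before k i) (coupling_args k i)"
  "depends_only_on {s. ord s < k} (admissible_before k i) (coupling_args k i)"
proof -
  have "precedes (lay l) (sub d) k i" if "lay l \<le> k - 1 \<or> lay l = k \<and> sub d < i" for l d
    using that is_index_lay_sub[of l d] by auto
  from stacked_Phi_regular[where P="\<lambda>l d. lay l \<le> k - 1 \<or> lay l = k \<and> sub d < i", OF this]
  show "smooth_on (admissible_before k i) (coupling_args k i)"
    "depends_only_on {s. ord s < k} (admissible_before k i) (coupling_args k i)"
    unfolding coupling_args_eq[OF assms] by simp_all
qed

lemma regular_first_layer:
  assumes "k = 1" "i \<in> {1..N}"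
  shows "regular k i"
proof -
  have adm: "admissible k i = admissible_before k i"
    using assms(1) by (simp add: admissible_def args_in_domain_def)
  have Phi: "\<Phi> k i = (\<lambda>Y. blk sub i (Y $ the_inv ord 0))"
    using Phi_1[OF assms(2)] assms(1) by blast
  have "ord (the_inv ord 0) = 0"
    using the_inv_into_range[OF ord] by simp
  then have "depends_only_on {s. ord s < k} (admissible k i) (\<Phi> k i)"
    unfolding Phi depends_only_on_def using assms(1) by auto
  moreover have "smooth_on (admissible k i) (\<Phi> k i)"
    unfolding Phi
    by (rule smooth_on_bounded_linear[OF bounded_linear_compose[OF bounded_linear_blk bounded_linear_vec_nth]])
  ultimately show ?thesis
    using open_admissible_before cylinder_admissible_before by (simp add: regular_def adm)
qed

context
  assumes higher: "2 \<le> k" "is_index k i"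
begin

lemma previous_layer: "k - 1 \<in> {1..r}" "i \<in> {1..N}"
  using higher by auto

lemma total_derivative_regular:
  shows "smooth_on (admissible_before k i) (total_derivative k i)"
    and "depends_only_on {s. ord s < k} (admissible_before k i) (total_derivative k i)"
proof -
  have prev: "precedes (k - 1) i k i" "is_index (k - 1) i"
    using higher by auto
  let ?U = "admissible (k - 1) i"
  have U: "open ?U" "cylinder {s. ord s < k - 1} ?U" "smooth_on ?U (\<Phi> (k - 1) i)"
    "depends_only_on {s. ord s < k - 1} ?U (\<Phi> (k - 1) i)"
    using earlier_regular[OF prev] by (auto simp: regular_def)
  have diff: "\<Phi> (k - 1) i differentiable at Z" if "Z \<in> ?U" for Z
    by (rule smooth_on_imp_differentiable[OF U(3) that])
  show "smooth_on (admissible_before k i) (total_derivative k i)"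
    unfolding total_derivative_def
    by (rule smooth_on_frechet_derivative_apply[OF open_admissible_before
          regular_on_admissible_before(1)[OF prev] smooth_on_bounded_linear[OF bounded_linear_tshift]])
  show "depends_only_on {s. ord s < k} (admissible_before k i) (total_derivative k i)"
    unfolding depends_only_on_def
  proof (intro ballI allI impI)
    fix Y Y' assume "Y \<in> admissible_before k i" and agree: "\<forall>s\<in>{s. ord s < k}. Y' $ s = Y $ s"
    then have "Y \<in> ?U"
      using admissible_before_subset[OF prev] by blast
    have "frechet_derivative (\<Phi> (k - 1) i) (at Y') = frechet_derivative (\<Phi> (k - 1) i) (at Y)"
      using agree by (intro frechet_derivative_depends_only_on[OF U(1,2,4) diff \<open>Y \<in> ?U\<close>]) auto
    moreover have "frechet_derivative (\<Phi> (k - 1) i) (at Y) (tshift ord r Y')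
        = frechet_derivative (\<Phi> (k - 1) i) (at Y) (tshift ord r Y)"
    proof (rule frechet_derivative_apply_depends_only_on[where I="{s. ord s < k - 1}", OF diff[OF \<open>Y \<in> ?U\<close>]])
      show "\<Phi> (k - 1) i Z = \<Phi> (k - 1) i Y" if "\<forall>s\<in>{s. ord s < k - 1}. Z $ s = Y $ s" for Z
        by (rule depends_only_onD[OF U(4) \<open>Y \<in> ?U\<close> that])
      show "\<forall>s\<in>{s. ord s < k - 1}. tshift ord r Y' $ s = tshift ord r Y $ s"
        using tshift_agree_below[OF ord, of k Y' Y] agree by simp
    qed
    ultimately show "total_derivative k i Y' = total_derivative k i Y"
      by (simp add: total_derivative_def)
  qed
qed

lemma coupling_domain_open: "open (admissible_before k i \<inter> coupling_args k i -` DS (k - 1) i)"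
proof (rule continuous_open_preimage[OF smooth_on_imp_continuous_on open_admissible_before])
  show "smooth_on (admissible_before k i) (coupling_args k i)"
    using coupling_args_regular higher(1) by simp
  show "open (DS (k - 1) i)"
    using Db_smooth[OF previous_layer] by simp
qed

lemma h_args_smooth: "smooth_on (admissible_before k i \<inter> coupling_args k i -` DS (k - 1) i) (h_args k i)"
proof -
  let ?U = "admissible_before k i \<inter> coupling_args k i -` DS (k - 1) i"
  have sub: "?U \<subseteq> admissible_before k i"
    by blast
  have "smooth_on ?U (\<lambda>Y. Db (k - 1) i (coupling_args k i Y))"
  proof (rule smooth_on_compose[OF coupling_domain_open, of "DS (k - 1) i"])
    show "smooth_on ?U (coupling_args k i)"
      using coupling_args_regular(1) higher(1) smooth_on_subset[OF _ sub] by simp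
  qed (use Db_smooth[OF previous_layer] in auto)
  then have "smooth_on ?U (velocity_arg k i)"
    unfolding velocity_arg_def
    by (intro smooth_on_bounded_linear_comp[OF coupling_domain_open bounded_linear_blk]
        smooth_on_diff[OF coupling_domain_open] smooth_on_subset[OF total_derivative_regular(1) sub])
  then show ?thesis
    unfolding h_args_def
    by (intro smooth_on_Pair[OF coupling_domain_open] smooth_on_subset[OF state_args_regular(1) sub])
qed

lemma args_depend_only_on:
  assumes "Y \<in> admissible_before k i" "\<forall>s\<in>{s. ord s < k}. Y' $ s = Y $ s"
  shows "coupling_args k i Y' = coupling_args k i Y" "h_args k i Y' = h_args k i Y"
  using depends_only_onD[OF coupling_args_regular(2) assms] depends_only_onD[OF state_args_regular(2) assms]
    depends_only_onD[OF total_derivative_regular(2) assms] higher(1)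
  by (simp_all add: h_args_def velocity_arg_def)

lemma admissible_higher_eq:
  "admissible k i = (admissible_before k i \<inter> coupling_args k i -` DS (k - 1) i) \<inter> h_args k i -` HS (k - 1) i"
  using higher(1) by (auto simp: admissible_def args_in_domain_def)

lemma Phi_higher_eq: "\<Phi> k i = (\<lambda>Y. blk sub i (h (k - 1) i (h_args k i Y)))"
  using Phi_step higher by fastforce

lemma cylinder_admissible_higher: "cylinder {s. ord s < k} (admissible k i)"
  unfolding cylinder_def
proof (intro ballI allI impI)
  fix Y Y' assume Y: "Y \<in> admissible k i" and agree: "\<forall>s\<in>{s. ord s < k}. Y' $ s = Y $ s"
  then have "Y \<in> admissible_before k i"
    by (simp add: admissible_def)
  note same_args = args_depend_only_on[OF this agree]
  have "Y' \<in> admissible_before k i"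
    by (rule cylinderD[OF cylinder_admissible_before \<open>Y \<in> admissible_before k i\<close> agree])
  with Y show "Y' \<in> admissible k i"
    by (simp add: admissible_higher_eq same_args)
qed

lemma regular_higher_layer: "regular k i"
proof -
  have HS: "open (HS (k - 1) i)" "smooth_on (HS (k - 1) i) (h (k - 1) i)"
    using h_smooth[OF previous_layer] by auto
  have open_adm: "open (admissible k i)"
    unfolding admissible_higher_eq
    by (rule continuous_open_preimage[OF smooth_on_imp_continuous_on[OF h_args_smooth] coupling_domain_open HS(1)])
  have "depends_only_on {s. ord s < k} (admissible k i) (\<Phi> k i)"
    unfolding depends_only_on_def Phi_higher_eq
  proof (intro ballI allI impI)
    fix Y Y' assume "Y \<in> admissible k i" and agree: "\<forall>s\<in>{s. ord s < k}. Y' $ s = Y $ s"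
    then have "h_args k i Y' = h_args k i Y"
      by (intro args_depend_only_on(2)) (simp_all add: admissible_def)
    then show "blk sub i (h (k - 1) i (h_args k i Y')) = blk sub i (h (k - 1) i (h_args k i Y))"
      by simp
  qed
  moreover have "smooth_on (admissible k i) (\<lambda>Y. h (k - 1) i (h_args k i Y))"
  proof (rule smooth_on_compose[OF open_adm HS(1) _ HS(2)])
    show "h_args k i ` admissible k i \<subseteq> HS (k - 1) i"
      by (auto simp: admissible_higher_eq)
    show "smooth_on (admissible k i) (h_args k i)"
      by (rule smooth_on_subset[OF h_args_smooth]) (auto simp: admissible_higher_eq)
  qed
  then have "smooth_on (admissible k i) (\<Phi> k i)"
    unfolding Phi_higher_eq by (rule smooth_on_bounded_linear_comp[OF open_adm bounded_linear_blk])
  ultimately show ?thesis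
    using open_adm cylinder_admissible_higher by (simp add: regular_def)
qed

end

end

lemma regular: "is_index k i \<Longrightarrow> regular k i"
proof (induction k i rule: precedes_induct)
  case (1 k i)
  show ?case
  proof (cases "k = 1")
    case True
    with "1.prems" show ?thesis
      by (intro regular_first_layer[OF "1.IH"]) auto
  next
    case False
    with "1.prems" show ?thesis
      by (intro regular_higher_layer[OF "1.IH"]) auto
  qed
qed

lemma admissible_subset:
  assumes "is_index k i"
  shows "admissible (Suc r) N \<subseteq> admissible k i"
proof (cases "k = Suc r \<and> i = N")
  case False
  with assms have "precedes k i (Suc r) N"
    by auto
  then have "admissible_before (Suc r) N \<subseteq> admissible k i"
    using assms by (rule admissible_before_subset)
  then show ?thesis
    by (auto simp: admissible_def)
qed simp

lemma open_admissible_last: "open (admissible (Suc r) N)"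
  using regular[of "Suc r" N] sub[of undefined] by (simp add: regular_def)

lemma smooth_on_admissible_last:
  "k \<in> {1..Suc r} \<Longrightarrow> i \<in> {1..N} \<Longrightarrow> smooth_on (admissible (Suc r) N) (\<Phi> k i)"
  using regular[of k i] admissible_subset[of k i] smooth_on_subset by (auto simp: regular_def)

end

section \<open>States and inputs along trajectories\<close>

locale flat_trajectory = flat_recursion N r sub lay ord Db h \<Phi> DS HS
  for N r :: nat and sub :: "'d::finite \<Rightarrow> nat" and lay :: "'l::finite \<Rightarrow> nat"
    and ord :: "'t::finite \<Rightarrow> nat" and Db h \<Phi> DS HS +
  fixes fb :: "nat \<Rightarrow> nat \<Rightarrow> real^'d^'l \<Rightarrow> real^'d"
    and fr :: "nat \<Rightarrow> (real^'d^'l) \<times> (real^'d) \<Rightarrow> real^'d"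
    and \<Delta> :: "real^'d^'l \<Rightarrow> real^'d^'l"
    and X :: "((real^'d^'l) \<times> (real^'d)) set"
    and T :: "real set" and xt :: "real \<Rightarrow> real^'d^'l" and ut :: "real \<Rightarrow> real^'d"
    and Ys :: "nat \<Rightarrow> real \<Rightarrow> real^'d"
  assumes lower_tri: "\<And>x u i j. (x, u) \<in> X \<Longrightarrow> i \<in> {1..N} \<Longrightarrow> j \<in> {1..r} \<Longrightarrow>
          blk sub i (\<Delta> x $ layer lay j) = blk sub i (Db j i (lowtri sub lay i j x))"
    and Db_domain: "\<And>x u i j. (x, u) \<in> X \<Longrightarrow> i \<in> {1..N} \<Longrightarrow> j \<in> {1..r} \<Longrightarrow>
          lowtri sub lay i j x \<in> DS j i"
    and h_domain: "\<And>x u i k. (x, u) \<in> X \<Longrightarrow> i \<in> {1..N} \<Longrightarrow> k \<in> {1..r} \<Longrightarrow>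
          (bmask sub lay i k x, blk sub i (if k < r then fb k i (bmask sub lay i (Suc k) x)
                                          else fr i (bmask sub lay i r x, blk sub i u))) \<in> HS k i"
    and h_inv: "\<And>x u i k. (x, u) \<in> X \<Longrightarrow> i \<in> {1..N} \<Longrightarrow> k \<in> {1..<r} \<Longrightarrow>
          blk sub i (h k i (bmask sub lay i k x, blk sub i (fb k i (bmask sub lay i (Suc k) x))))
            = blk sub i (x $ layer lay (Suc k))"
    and h_inv_r: "\<And>x u i. (x, u) \<in> X \<Longrightarrow> i \<in> {1..N} \<Longrightarrow>
          blk sub i (h r i (bmask sub lay i r x, blk sub i (fr i (bmask sub lay i r x, blk sub i u))))
            = blk sub i u"
    and T_open: "open T"
    and state_in_X: "\<And>t. t \<in> T \<Longrightarrow> (xt t, ut t) \<in> X"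
    and state_deriv: "\<And>t. t \<in> T \<Longrightarrow>
          (xt has_vector_derivative (Fj sub lay r fb fr (xt t) (ut t) + \<Delta> (xt t))) (at t)"
    and flat_output: "\<And>t. t \<in> T \<Longrightarrow> Ys 0 t = xt t $ layer lay 1"
    and flat_output_deriv: "\<And>s t. s < r \<Longrightarrow> t \<in> T \<Longrightarrow> (Ys s has_vector_derivative Ys (Suc s) t) (at t)"
begin

definition target :: "nat \<Rightarrow> nat \<Rightarrow> real \<Rightarrow> real^'d" where
  "target k i t = (if k \<le> r then blk sub i (xt t $ layer lay k) else blk sub i (ut t))"

definition uncoupled_field :: "nat \<Rightarrow> nat \<Rightarrow> real \<Rightarrow> real^'d" where
  "uncoupled_field j i t = (if j < r then fb j i (bmask sub lay i (Suc j) (xt t))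
                            else fr i (bmask sub lay i r (xt t), blk sub i (ut t)))"

lemma h_uncoupled_field:
  assumes "j \<in> {1..r}" "i \<in> {1..N}" "t \<in> T"
  shows "blk sub i (h j i (bmask sub lay i j (xt t), blk sub i (uncoupled_field j i t))) = target (Suc j) i t"
proof (cases "j < r")
  case True
  then show ?thesis
    using h_inv[OF state_in_X[OF assms(3)] assms(2)] assms(1) by (simp add: uncoupled_field_def target_def)
next
  case False
  then show ?thesis
    using h_inv_r[OF state_in_X[OF assms(3)] assms(2)] assms(1) by (simp add: uncoupled_field_def target_def)
qed

lemma Fj_layer:
  "j \<in> {1..r} \<Longrightarrow> blk sub i (Fj sub lay r fb fr (xt t) (ut t) $ layer lay j) = blk sub i (uncoupled_field j i t)"
  by (simp add: Fj_def uncoupled_field_def lay_layer[OF lay] vec_eq_iff blk_nth)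

lemma r_pos: "1 \<le> r"
  using lay_range by fastforce

context
  fixes k i t
  assumes earlier_values: "\<And>k' i'. precedes k' i' k i \<Longrightarrow> is_index k' i' \<Longrightarrow>
      \<forall>t\<in>T. tower ord Ys t \<in> admissible k' i' \<and> \<Phi> k' i' (tower ord Ys t) = target k' i' t"
    and t: "t \<in> T"
begin

lemma stacked_Phi_at_trajectory:
  "precedes (lay l) (sub d) k i \<Longrightarrow> \<Phi> (lay l) (sub d) (tower ord Ys t) $ d = xt t $ l $ d"
  using earlier_values[OF _ is_index_lay_sub] t lay_range[of l]
  by (auto simp: target_def layer_lay[OF lay] blk_nth)

lemma state_args_at_trajectory: "state_args k i (tower ord Ys t) = bmask sub lay i (k - 1) (xt t)"
proof -
  have "state_args k i (tower ord Ys t) $ l $ d = bmask sub lay i (k - 1) (xt t) $ l $ d" for l d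
  proof (cases "sub d = i \<and> lay l \<le> k - 1")
    case True
    then have "precedes (lay l) (sub d) k i"
      using lay_range[of l] by auto
    then have "\<Phi> (lay l) (sub d) (tower ord Ys t) $ d = xt t $ l $ d"
      by (rule stacked_Phi_at_trajectory)
    with True show ?thesis
      by (simp add: state_args_eq bmask_def)
  qed (auto simp: state_args_eq bmask_def)
  then show ?thesis
    by (simp add: vec_eq_iff)
qed

lemma coupling_args_at_trajectory:
  assumes "1 \<le> k"
  shows "coupling_args k i (tower ord Ys t) = lowtri sub lay i (k - 1) (xt t)"
proof -
  have "coupling_args k i (tower ord Ys t) $ l $ d = lowtri sub lay i (k - 1) (xt t) $ l $ d" for l d
  proof (cases "lay l \<le> k - 1 \<or> lay l = k \<and> sub d < i")
    case True
    then have "precedes (lay l) (sub d) k i"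
      using lay_range[of l] by auto
    then have "\<Phi> (lay l) (sub d) (tower ord Ys t) $ d = xt t $ l $ d"
      by (rule stacked_Phi_at_trajectory)
    with True assms show ?thesis
      by (simp add: coupling_args_eq lowtri_def)
  qed (use assms in \<open>auto simp: coupling_args_eq lowtri_def\<close>)
  then show ?thesis
    by (simp add: vec_eq_iff)
qed

context
  assumes "2 \<le> k" "is_index k i"
begin

lemma total_derivative_at_trajectory:
  "total_derivative k i (tower ord Ys t)
     = blk sub i ((Fj sub lay r fb fr (xt t) (ut t) + \<Delta> (xt t)) $ layer lay (k - 1))"
proof -
  have prev: "precedes (k - 1) i k i" "is_index (k - 1) i"
    using \<open>2 \<le> k\<close> \<open>is_index k i\<close> by auto
  have U: "smooth_on (admissible (k - 1) i) (\<Phi> (k - 1) i)"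
    "depends_only_on {s. ord s < k - 1} (admissible (k - 1) i) (\<Phi> (k - 1) i)"
    using regular[OF prev(2)] by (simp_all add: regular_def)
  have on_trajectory: "tower ord Ys t' \<in> admissible (k - 1) i"
    "\<Phi> (k - 1) i (tower ord Ys t') = blk sub i (xt t' $ layer lay (k - 1))" if "t' \<in> T" for t'
    using earlier_values[OF prev] that \<open>is_index k i\<close> by (auto simp: target_def)
  show ?thesis
    unfolding total_derivative_def
  proof (rule frechet_derivative_along_curve[where I="{s. ord s < r}" and c="tower ord Ys"
        and q="\<lambda>t'. blk sub i (xt t' $ layer lay (k - 1))", OF T_open t])
    show "\<Phi> (k - 1) i differentiable at (tower ord Ys t)"
      by (rule smooth_on_imp_differentiable[OF U(1) on_trajectory(1)[OF t]])
    show "\<Phi> (k - 1) i Z = blk sub i (xt t' $ layer lay (k - 1))"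
      if "t' \<in> T" "\<forall>s\<in>{s. ord s < r}. Z $ s = tower ord Ys t' $ s" for t' Z
    proof -
      have "\<Phi> (k - 1) i Z = \<Phi> (k - 1) i (tower ord Ys t')"
        using that(2) \<open>is_index k i\<close> by (intro depends_only_onD[OF U(2) on_trajectory(1)[OF that(1)]]) auto
      then show ?thesis
        using on_trajectory(2)[OF that(1)] by simp
    qed
    show "((\<lambda>t. tower ord Ys t $ s) has_vector_derivative tshift ord r (tower ord Ys t) $ s) (at t)"
      if "s \<in> {s. ord s < r}" for s
    proof -
      have "tshift ord r (tower ord Ys t) $ s = Ys (Suc (ord s)) t"
        using that by (subst tshift_tower[OF ord]) simp
      then show ?thesis
        using flat_output_deriv[of "ord s" t] that t by (simp add: tower_def)
    qed
    show "tshift ord r (tower ord Ys t) $ s = 0" if "s \<notin> {s. ord s < r}" for s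
      using that by (subst tshift_tower[OF ord]) simp
    show "((\<lambda>t'. blk sub i (xt t' $ layer lay (k - 1))) has_vector_derivative
        blk sub i ((Fj sub lay r fb fr (xt t) (ut t) + \<Delta> (xt t)) $ layer lay (k - 1))) (at t)"
      using bounded_linear.has_vector_derivative[OF
          bounded_linear_compose[OF bounded_linear_blk bounded_linear_vec_nth] state_deriv[OF t]]
      by simp
  qed
qed

lemma velocity_arg_at_trajectory: "velocity_arg k i (tower ord Ys t) = blk sub i (uncoupled_field (k - 1) i t)"
proof -
  have k1: "k - 1 \<in> {1..r}" and "1 \<le> k" and i: "i \<in> {1..N}"
    using \<open>2 \<le> k\<close> \<open>is_index k i\<close> by auto
  have "velocity_arg k i (tower ord Ys t)
      = blk sub i (Fj sub lay r fb fr (xt t) (ut t) $ layer lay (k - 1))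
        + blk sub i (\<Delta> (xt t) $ layer lay (k - 1))
        - blk sub i (Db (k - 1) i (lowtri sub lay i (k - 1) (xt t)))"
    unfolding velocity_arg_def total_derivative_at_trajectory coupling_args_at_trajectory[OF \<open>1 \<le> k\<close>]
    by (simp only: blk_diff blk_add blk_blk vector_add_component)
  also have "\<dots> = blk sub i (uncoupled_field (k - 1) i t)"
    unfolding Fj_layer[OF k1] lower_tri[OF state_in_X[OF t] i k1] by simp
  finally show ?thesis .
qed


lemma higher_layer_at_trajectory:
  "args_in_domain k i (tower ord Ys t) \<and> \<Phi> k i (tower ord Ys t) = target k i t"
proof -
  have "1 \<le> k" and k1: "k - 1 \<in> {1..r}" and i: "i \<in> {1..N}" and "Suc (k - 1) = k"
    using \<open>2 \<le> k\<close> \<open>is_index k i\<close> by auto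
  note states = state_args_at_trajectory
    and coupling = coupling_args_at_trajectory[OF \<open>1 \<le> k\<close>]
    and velocity = velocity_arg_at_trajectory
  have "args_in_domain k i (tower ord Ys t)"
    using Db_domain[OF state_in_X[OF t] i k1]
      h_domain[OF state_in_X[OF t] i k1, folded uncoupled_field_def] \<open>2 \<le> k\<close>
    by (simp add: args_in_domain_def h_args_def states coupling velocity)
  moreover have "\<Phi> k i (tower ord Ys t) = target k i t"
    using Phi_step[of k i] \<open>is_index k i\<close> \<open>2 \<le> k\<close> h_uncoupled_field[OF k1 i t] \<open>Suc (k - 1) = k\<close>
    by (simp add: h_args_def states velocity)
  ultimately show ?thesis ..
qed

end

end

lemma values_along_trajectory:
  "is_index k i \<Longrightarrow> \<forall>t\<in>T. tower ord Ys t \<in> admissible k i \<and> \<Phi> k i (tower ord Ys t) = target k i t"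
proof (induction k i rule: precedes_induct)
  case (1 k i)
  show ?case
  proof
    fix t assume t: "t \<in> T"
    have "tower ord Ys t \<in> admissible_before k i"
      using "1.IH" t by (auto simp: admissible_before_def admissible_def)
    moreover have "args_in_domain k i (tower ord Ys t) \<and> \<Phi> k i (tower ord Ys t) = target k i t"
    proof (cases "k = 1")
      case True
      have "ord (the_inv ord 0) = 0"
        using the_inv_into_range[OF ord] by simp
      then show ?thesis
        using True "1.prems" Phi_1 flat_output[OF t] r_pos
        by (simp add: args_in_domain_def target_def tower_def)
    next
      case False
      with "1.prems" have "2 \<le> k"
        by auto
      show ?thesis
        by (rule higher_layer_at_trajectory[OF _ t \<open>2 \<le> k\<close> "1.prems"], rule "1.IH")
    qed
    ultimately show "tower ord Ys t \<in> admissible k i \<and> \<Phi> k i (tower ord Ys t) = target k i t"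
      by (simp add: admissible_def)
  qed
qed

lemma recovers_states_and_inputs:
  assumes "t \<in> T"
  shows "tower ord Ys t \<in> admissible (Suc r) N \<and>
    (\<forall>i\<in>{1..N}. (\<forall>k\<in>{1..r}. blk sub i (xt t $ layer lay k) = \<Phi> k i (tower ord Ys t))
               \<and> blk sub i (ut t) = \<Phi> (Suc r) i (tower ord Ys t))"
proof -
  have "is_index (Suc r) N" "\<And>k i. k \<in> {1..r} \<Longrightarrow> i \<in> {1..N} \<Longrightarrow> is_index k i"
    using sub[of undefined] by auto
  then show ?thesis
    using values_along_trajectory assms by (simp add: target_def)
qed

end

theorem theorem2:
  fixes N r :: nat
    and sub :: "'d::finite \<Rightarrow> nat" and lay :: "'l::finite \<Rightarrow> nat" and ord :: "'t::finite \<Rightarrow> nat"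
    and fb :: "nat \<Rightarrow> nat \<Rightarrow> real^'d^'l \<Rightarrow> real^'d"
    and fr :: "nat \<Rightarrow> (real^'d^'l) \<times> (real^'d) \<Rightarrow> real^'d"
    and \<Delta> :: "real^'d^'l \<Rightarrow> real^'d^'l"
    and Db :: "nat \<Rightarrow> nat \<Rightarrow> real^'d^'l \<Rightarrow> real^'d"
    and h :: "nat \<Rightarrow> nat \<Rightarrow> (real^'d^'l) \<times> (real^'d) \<Rightarrow> real^'d"
    and \<Phi> :: "nat \<Rightarrow> nat \<Rightarrow> real^'d^'t \<Rightarrow> real^'d"
    and X :: "((real^'d^'l) \<times> (real^'d)) set" and xs :: "real^'d^'l" and us :: "real^'d"
    and FS :: "nat \<Rightarrow> nat \<Rightarrow> (real^'d^'l) set"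
    and FR :: "nat \<Rightarrow> ((real^'d^'l) \<times> (real^'d)) set"
    and DS :: "nat \<Rightarrow> nat \<Rightarrow> (real^'d^'l) set"
    and HS :: "nat \<Rightarrow> nat \<Rightarrow> ((real^'d^'l) \<times> (real^'d)) set"
  assumes sub: "\<forall>d. sub d \<in> {1..N}"
    and lay: "bij_betw lay UNIV {1..r}"
    and ord: "bij_betw ord UNIV {0..r}"
    and X_open: "open X" and op_in_X: "(xs, us) \<in> X"
    and fb_smooth: "\<forall>j\<in>{1..<r}. \<forall>i\<in>{1..N}. open (FS j i) \<and>
          bmask sub lay i (Suc j) xs \<in> FS j i \<and> smooth_on (FS j i) (fb j i)"
    and fr_smooth: "\<forall>i\<in>{1..N}. open (FR i) \<and>
          (bmask sub lay i r xs, blk sub i us) \<in> FR i \<and> smooth_on (FR i) (fr i)"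
    and fb_reg: "\<forall>j\<in>{1..<r}. \<forall>i\<in>{1..N}. det_on {d. sub d = i}
          (\<lambda>d d'. frechet_derivative (fb j i) (at (bmask sub lay i (Suc j) xs))
                    (axis (layer lay (Suc j)) (axis d' 1)) $ d) \<noteq> 0"
    and fr_reg: "\<forall>i\<in>{1..N}. det_on {d. sub d = i}
          (\<lambda>d d'. frechet_derivative (fr i) (at (bmask sub lay i r xs, blk sub i us))
                    (0, axis d' 1) $ d) \<noteq> 0"
    and Delta_smooth: "smooth_on (fst ` X) \<Delta>"
    and lower_tri: "\<forall>(x, u)\<in>X. \<forall>i\<in>{1..N}. \<forall>j\<in>{1..r}.
          blk sub i (\<Delta> x $ layer lay j) = blk sub i (Db j i (lowtri sub lay i j x))"
    and Db_smooth: "\<forall>j\<in>{1..r}. \<forall>i\<in>{1..N}. open (DS j i) \<and>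
          (\<forall>(x, u)\<in>X. lowtri sub lay i j x \<in> DS j i) \<and> smooth_on (DS j i) (Db j i)"
    and h_smooth: "\<forall>k\<in>{1..r}. \<forall>i\<in>{1..N}. open (HS k i) \<and> smooth_on (HS k i) (h k i) \<and>
          (\<forall>(x, u)\<in>X. (bmask sub lay i k x,
              blk sub i (if k < r then fb k i (bmask sub lay i (Suc k) x)
                         else fr i (bmask sub lay i r x, blk sub i u))) \<in> HS k i)"
    and h_inv: "\<forall>(x, u)\<in>X. \<forall>i\<in>{1..N}. \<forall>k\<in>{1..<r}.
          blk sub i (h k i (bmask sub lay i k x, blk sub i (fb k i (bmask sub lay i (Suc k) x))))
            = blk sub i (x $ layer lay (Suc k))"
    and h_inv_r: "\<forall>(x, u)\<in>X. \<forall>i\<in>{1..N}.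
          blk sub i (h r i (bmask sub lay i r x, blk sub i (fr i (bmask sub lay i r x, blk sub i u))))
            = blk sub i u"
    and Phi_1: "\<forall>i\<in>{1..N}. \<forall>Y. \<Phi> 1 i Y = blk sub i (Y $ the_inv ord 0)"
    and Phi_rec: "\<forall>k\<in>{2..Suc r}. \<forall>i\<in>{1..N}. \<forall>Y.
          \<Phi> k i Y = blk sub i (h (k - 1) i
             (bmask sub lay i (k - 1) (stackPhi sub lay \<Phi> Y),
              blk sub i (frechet_derivative (\<Phi> (k - 1) i) (at Y) (tshift ord r Y)
                         - Db (k - 1) i (lowtri sub lay i (k - 1) (stackPhi sub lay \<Phi> Y)))))"
  shows "\<exists>\<Omega>. open \<Omega> \<and> (\<forall>k\<in>{1..Suc r}. \<forall>i\<in>{1..N}. smooth_on \<Omega> (\<Phi> k i)) \<and>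
     (\<forall>(T :: real set) (xt :: real \<Rightarrow> real^'d^'l) (ut :: real \<Rightarrow> real^'d) (Ys :: nat \<Rightarrow> real \<Rightarrow> real^'d).
        open T
        \<and> (\<forall>t\<in>T. (xt t, ut t) \<in> X \<and>
              (xt has_vector_derivative (Fj sub lay r fb fr (xt t) (ut t) + \<Delta> (xt t))) (at t))
        \<and> (\<forall>t\<in>T. Ys 0 t = xt t $ layer lay 1)
        \<and> (\<forall>s<r. \<forall>t\<in>T. (Ys s has_vector_derivative Ys (Suc s) t) (at t))
        \<longrightarrow> (\<forall>t\<in>T. tower ord Ys t \<in> \<Omega> \<and>
              (\<forall>i\<in>{1..N}. (\<forall>k\<in>{1..r}. blk sub i (xt t $ layer lay k) = \<Phi> k i (tower ord Ys t))
                         \<and> blk sub i (ut t) = \<Phi> (Suc r) i (tower ord Ys t))))"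
proof -
  have "flat_recursion N r sub lay ord Db h \<Phi> DS HS"
    unfolding flat_recursion_def using sub lay ord Db_smooth h_smooth Phi_1 Phi_rec by blast
  then interpret recursion: flat_recursion N r sub lay ord Db h \<Phi> DS HS .
  show ?thesis
  proof (intro exI conjI allI impI)
    show "open (recursion.admissible (Suc r) N)"
      by (rule recursion.open_admissible_last)
    show "\<forall>k\<in>{1..Suc r}. \<forall>i\<in>{1..N}. smooth_on (recursion.admissible (Suc r) N) (\<Phi> k i)"
      using recursion.smooth_on_admissible_last by blast
    fix T xt ut Ys
    assume "open T \<and> (\<forall>t\<in>T. (xt t, ut t) \<in> X \<and>
              (xt has_vector_derivative (Fj sub lay r fb fr (xt t) (ut t) + \<Delta> (xt t))) (at t))
        \<and> (\<forall>t\<in>T. Ys 0 t = xt t $ layer lay 1)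
        \<and> (\<forall>s<r. \<forall>t\<in>T. (Ys s has_vector_derivative Ys (Suc s) t) (at t))"
    then interpret trajectory: flat_trajectory N r sub lay ord Db h \<Phi> DS HS fb fr \<Delta> X T xt ut Ys
    proof (intro flat_trajectory.intro[OF \<open>flat_recursion N r sub lay ord Db h \<Phi> DS HS\<close>]
        flat_trajectory_axioms.intro)
      show "blk sub i (\<Delta> x $ layer lay j) = blk sub i (Db j i (lowtri sub lay i j x))"
        and "lowtri sub lay i j x \<in> DS j i"
        if "(x, u) \<in> X" "i \<in> {1..N}" "j \<in> {1..r}" for x u i j
        using lower_tri Db_smooth that by fastforce+
      show "(bmask sub lay i k x, blk sub i (if k < r then fb k i (bmask sub lay i (Suc k) x)
              else fr i (bmask sub lay i r x, blk sub i u))) \<in> HS k i"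
        if "(x, u) \<in> X" "i \<in> {1..N}" "k \<in> {1..r}" for x u i k
        using h_smooth that by fastforce
      show "blk sub i (h k i (bmask sub lay i k x, blk sub i (fb k i (bmask sub lay i (Suc k) x))))
          = blk sub i (x $ layer lay (Suc k))"
        if "(x, u) \<in> X" "i \<in> {1..N}" "k \<in> {1..<r}" for x u i k
        using h_inv that by fastforce
      show "blk sub i (h r i (bmask sub lay i r x, blk sub i (fr i (bmask sub lay i r x, blk sub i u))))
          = blk sub i u" if "(x, u) \<in> X" "i \<in> {1..N}" for x u i
        using h_inv_r that by fastforce
    qed auto
    show "\<forall>t\<in>T. tower ord Ys t \<in> recursion.admissible (Suc r) N \<and>
        (\<forall>i\<in>{1..N}. (\<forall>k\<in>{1..r}. blk sub i (xt t $ layer lay k) = \<Phi> k i (tower ord Ys t))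
                   \<and> blk sub i (ut t) = \<Phi> (Suc r) i (tower ord Ys t))"
      using trajectory.recovers_states_and_inputs by blast
  qed
qed

end
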